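(* Let $\mathbb X$ be a multi-sorted topological structure in the signature of $\underset{\sim}{\mathbf M}_n$, with sorts $X_0,\dots,X_n$, operations $g_k\colon X_k\to X_0$ ($k\in[1,n]$), relations $\leqslant^k$ ($k\in[0,n]$) and $\leqslant^{jk}$ ($1\le j<k\le n$), and topology $\mathscr T$. Then $\mathbb X\in\mathbb{IS}_c\mathbb P(\underset{\sim}{\mathbf M}_n)$ if and only if all of the following hold: (A1) $g_k\colon X_k\to X_0$ is continuous for all $k\in[1,n]$; (A2) for all $k\in[1,n]$ and all $x,y\in X_k$, if $x\leqslant^k y$ then $g_k(x)=g_k(y)$; (A3) for all $j,k\in[1,n]$ with $j<k$ and all $x\in X_j$, $y\in X_k$, if $x\leqslant^{jk}y$ then $g_j(x)=g_k(y)$; (A4) for all $j,k\in[1,n]$ with $j<k$ and all $x,y\in X_j$, $u,v\in X_k$, if $x\leqslant^j y$, $y\leqslant^{jk}u$ and $u\leqslant^k v$, then $x\leqslant^{jk}v$; (A5) for all $j,k,\ell\in[1,n]$ with $j<k<\ell$ and all $x\in X_j$, $y\in X_k$, $z\in X_\ell$, if $x\leqslant^{jk}y$ and $y\leqslant^{k\ell}z$, then $x\leqslant^{j\ell}z$; (A6) $\langle X_k;\leqslant^k,\mathscr T_k\rangle$ is a Priestley space for all $k\in[0,n]$ (in particular $\leqslant^k$ is a partial order on $X_k$); (A7) for all $j,k\in[1,n]$ with $j<k$ and all $x\in X_j$, $y\in X_k$ with $x\not\leqslant^{jk}y$, there exist sets $U_j,U_{j+1},\dots,U_k$, with $U_\ell$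 a clopen up-set of $\langle X_\ell;\leqslant^\ell,\mathscr T_\ell\rangle$ for each $\ell\in[j,k]$, which are mutually increasing and satisfy $x\in U_j$ and $y\in X_k\setminus U_k$. (When $n=1$, only (A1), (A2) and (A6) have any content.)
   Context: Fix an integer $n\ge 1$ and write $[m,p]=\{i\in\mathbb Z: m\le i\le p\}$. Let $M_0=\{\top^0,\mathbf f^0,\mathbf t^0,\bot^0\}$ and, for $k\in[1,n]$, $M_k=\{\top^k,\bot^k,\mathbf f^k,\mathbf t^k,\mathbf 0^k,\mathbf 1^k\}$ (pairwise disjoint sets). For $k\in[1,n]$ let $g_k\colon M_k\to M_0$ be the map $\top^k\mapsto\top^0$, $\bot^k\mapsto\bot^0$, $\mathbf f^k,\mathbf 0^k\mapsto\mathbf f^0$, $\mathbf t^k,\mathbf 1^k\mapsto\mathbf t^0$. Let $\leqslant^0$ be the partial order on $M_0$ with $\bot^0<\mathbf f^0<\top^0$, $\bot^0<\mathbf t^0<\top^0$, and $\mathbf f^0,\mathbf t^0$ incomparable. For $k\in[1,n]$ let $\leqslant^k$ be the partial order on $M_k$ whose only strict comparabilities are $\mathbf f^k<\mathbf 0^k$ and $\mathbf t^k<\mathbf 1^k$. For $1\le j<k\le n$ let ${\leqslant^{jk}}=\{(\top^j,\top^k),(\bot^j,\bot^k),(\mathbf f^j,\mathbf f^k),(\mathbf f^j,\mathbf 0^k),(\mathbf 0^j,\mathbf 0^k),(\mathbf t^j,\mathbf t^k),(\mathbf t^j,\mathbf 1^k),(\mathbf 1^j,\mathbf 1^k)\}\subseteq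 M_j\times M_k$. The multi-sorted structure $\underset{\sim}{\mathbf M}_n$ has sorts $M_0,\dots,M_n$, unary operations $g_k\colon M_k\to M_0$ ($k\in[1,n]$), binary relations $\leqslant^k$ ($k\in[0,n]$) and $\leqslant^{jk}$ ($1\le j<k\le n$), and the discrete topology on each sort. A multi-sorted topological structure in this signature consists of pairwise disjoint topological spaces $X_0,\dots,X_n$ (the sorts; $X=X_0\cup\dots\cup X_n$ carries the disjoint-union topology $\mathscr T$, and $\mathscr T_k$ denotes the topology on $X_k$), maps $g_k\colon X_k\to X_0$ ($k\in[1,n]$), and relations $\leqslant^k\subseteq X_k\times X_k$ ($k\in[0,n]$) and $\leqslant^{jk}\subseteq X_j\times X_k$ ($1\le j<k\le n$). A morphism between such structures is a continuous map sending each sort into the corresponding sort and preserving each $g_k$ and each relation; an isomorphism is a bijective morphism whose inverse is a morphism. For a non-empty set $S$ the power $\underset{\sim}{\mathbf M}_n^S$ has sorts $M_k^S$ with the product topology and operations and relations defined pointwise; a closed substructure is given by topologically closed subsets $Y_k\subseteq M_k^S$ with $g_k(Y_k)\subseteq Y_0$, with the restricted operations, relations and topology. $\mathbb{IS}_c\mathbb P(\underset{\sim}{\mathbf M}_n)$ is the class of structures isomorphic to a closed substructure of $\underset{\sim}{\mathbf M}_n^S$ for some non-empty set $S$. A Priestley space is an ordered topological space that is compact and totally order-disconnected (for $x\not\le y$ there is a clopen up-set containing $x$ but not $y$). A subset $U\subseteq X_\ell$ is an up-set of $\langle X_\ell;\leqslant^\ell\rangle$ if $x\in U$ and $x\leqslant^\ell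 y$ imply $y\in U$. Write ${\leqslant^{kk}}:={\leqslant^k}$ for $k\in[1,n]$. For $j\le k$ in $[1,n]$ and $U_\ell\subseteq X_\ell$ ($\ell\in[j,k]$), the sets $U_j,\dots,U_k$ are mutually increasing if for all $i\le\ell$ in $[j,k]$, whenever $x\in U_i$, $y\in X_\ell$ and $x\leqslant^{i\ell}y$, then $y\in U_\ell$. *)

theory Defs
  imports "HOL-Analysis.Analysis"
begin

text \<open>Elements of the sorts of M_n. The superscript k is the nat argument.
  Sort 0 is {Top 0, Fm 0, Tm 0, Bot 0}; sort k (k >= 1) is
  {Top k, Bot k, Fm k, Tm k, Zm k, Om k} (Zm = bold 0, Om = bold 1).\<close>
datatype mel = Top nat | Bot nat | Fm nat | Tm nat | Zm nat | Om nat

definition Msort :: "nat \<Rightarrow> mel set" where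
  "Msort k = (if k = 0 then {Top 0, Fm 0, Tm 0, Bot 0}
              else {Top k, Bot k, Fm k, Tm k, Zm k, Om k})"

fun gM :: "mel \<Rightarrow> mel" where
  "gM (Top _) = Top 0"
| "gM (Bot _) = Bot 0"
| "gM (Fm _) = Fm 0"
| "gM (Zm _) = Fm 0"
| "gM (Tm _) = Tm 0"
| "gM (Om _) = Tm 0"

definition leM :: "nat \<Rightarrow> mel \<Rightarrow> mel \<Rightarrow> bool" where
  "leM k a b = (a \<in> Msort k \<and> b \<in> Msort k \<and>
     (if k = 0 then (a = b \<or> a = Bot 0 \<or> b = Top 0)
      else (a = b \<or> (a = Fm k \<and> b = Zm k) \<or> (a = Tm k \<and> b = Om k))))"

definition lejkM :: "nat \<Rightarrow> nat \<Rightarrow> mel \<Rightarrow> mel \<Rightarrow> bool" where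
  "lejkM j k a b = ((a, b) \<in> {(Top j, Top k), (Bot j, Bot k), (Fm j, Fm k), (Fm j, Zm k),
                               (Zm j, Zm k), (Tm j, Tm k), (Tm j, Om k), (Om j, Om k)})"

definition PT :: "nat \<Rightarrow> 's set \<Rightarrow> ('s \<Rightarrow> mel) topology" where
  "PT k S = product_topology (\<lambda>_. discrete_topology (Msort k)) S"

definition gP :: "'s set \<Rightarrow> ('s \<Rightarrow> mel) \<Rightarrow> ('s \<Rightarrow> mel)" where
  "gP S f = restrict (\<lambda>s. gM (f s)) S"

definition leP :: "nat \<Rightarrow> 's set \<Rightarrow> ('s \<Rightarrow> mel) \<Rightarrow> ('s \<Rightarrow> mel) \<Rightarrow> bool" where
  "leP k S f h = (\<forall>s\<in>S. leM k (f s) (h s))"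

definition lejkP :: "nat \<Rightarrow> nat \<Rightarrow> 's set \<Rightarrow> ('s \<Rightarrow> mel) \<Rightarrow> ('s \<Rightarrow> mel) \<Rightarrow> bool" where
  "lejkP j k S f h = (\<forall>s\<in>S. lejkM j k (f s) (h s))"

definition closed_sub :: "nat \<Rightarrow> 's set \<Rightarrow> (nat \<Rightarrow> ('s \<Rightarrow> mel) set) \<Rightarrow> bool" where
  "closed_sub n S Y =
     ((\<forall>k\<le>n. closedin (PT k S) (Y k)) \<and>
      (\<forall>k\<in>{1..n}. \<forall>f\<in>Y k. gP S f \<in> Y 0))"

text \<open>A structure is given by topologies T k (k in [0,n]) on a common carrier type, whose
  spaces topspace (T k) are the (pairwise disjoint) sorts X_k; maps g k : X_k -> X_0;
  relations le k on X_k; relations lejk j k from X_j to X_k (1 <= j < k <= n).\<close>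
definition mstructure ::
  "nat \<Rightarrow> (nat \<Rightarrow> 'a topology) \<Rightarrow> (nat \<Rightarrow> 'a \<Rightarrow> 'a) \<Rightarrow> (nat \<Rightarrow> 'a \<Rightarrow> 'a \<Rightarrow> bool)
    \<Rightarrow> (nat \<Rightarrow> nat \<Rightarrow> 'a \<Rightarrow> 'a \<Rightarrow> bool) \<Rightarrow> bool" where
  "mstructure n T g le lejk =
     ((\<forall>j\<le>n. \<forall>k\<le>n. j \<noteq> k \<longrightarrow> topspace (T j) \<inter> topspace (T k) = {}) \<and>
      (\<forall>k\<in>{1..n}. \<forall>x\<in>topspace (T k). g k x \<in> topspace (T 0)) \<and>
      (\<forall>k\<le>n. \<forall>x y. le k x y \<longrightarrow> x \<in> topspace (T k) \<and> y \<in> topspace (T k)) \<and>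
      (\<forall>j k. 1 \<le> j \<and> j < k \<and> k \<le> n \<longrightarrow>
         (\<forall>x y. lejk j k x y \<longrightarrow> x \<in> topspace (T j) \<and> y \<in> topspace (T k))))"

text \<open>phi is an isomorphism from the structure onto the closed substructure Y of M_n^S:
  on each sort a homeomorphism onto Y_k, commuting with the g_k, and preserving and
  reflecting every relation (i.e. a bijective morphism whose inverse is a morphism).\<close>
definition iso_to ::
  "nat \<Rightarrow> (nat \<Rightarrow> 'a topology) \<Rightarrow> (nat \<Rightarrow> 'a \<Rightarrow> 'a) \<Rightarrow> (nat \<Rightarrow> 'a \<Rightarrow> 'a \<Rightarrow> bool)
    \<Rightarrow> (nat \<Rightarrow> nat \<Rightarrow> 'a \<Rightarrow> 'a \<Rightarrow> bool) \<Rightarrow> 's set \<Rightarrow> (nat \<Rightarrow> ('s \<Rightarrow> mel) set)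
    \<Rightarrow> ('a \<Rightarrow> ('s \<Rightarrow> mel)) \<Rightarrow> bool" where
  "iso_to n T g le lejk S Y \<phi> =
     ((\<forall>k\<le>n. homeomorphic_map (T k) (subtopology (PT k S) (Y k)) \<phi>) \<and>
      (\<forall>k\<in>{1..n}. \<forall>x\<in>topspace (T k). \<phi> (g k x) = gP S (\<phi> x)) \<and>
      (\<forall>k\<le>n. \<forall>x\<in>topspace (T k). \<forall>y\<in>topspace (T k). le k x y \<longleftrightarrow> leP k S (\<phi> x) (\<phi> y)) \<and>
      (\<forall>j k. 1 \<le> j \<and> j < k \<and> k \<le> n \<longrightarrow>
         (\<forall>x\<in>topspace (T j). \<forall>y\<in>topspace (T k). lejk j k x y \<longleftrightarrow> lejkP j k S (\<phi> x) (\<phi> y))))"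

definition ISCP_via ::
  "nat \<Rightarrow> (nat \<Rightarrow> 'a topology) \<Rightarrow> (nat \<Rightarrow> 'a \<Rightarrow> 'a) \<Rightarrow> (nat \<Rightarrow> 'a \<Rightarrow> 'a \<Rightarrow> bool)
    \<Rightarrow> (nat \<Rightarrow> nat \<Rightarrow> 'a \<Rightarrow> 'a \<Rightarrow> bool) \<Rightarrow> 's set \<Rightarrow> bool" where
  "ISCP_via n T g le lejk S =
     (S \<noteq> {} \<and> (\<exists>Y \<phi>. closed_sub n S Y \<and> iso_to n T g le lejk S Y \<phi>))"

definition upset :: "'a topology \<Rightarrow> ('a \<Rightarrow> 'a \<Rightarrow> bool) \<Rightarrow> 'a set \<Rightarrow> bool" where
  "upset X le U = (U \<subseteq> topspace X \<and> (\<forall>x\<in>U. \<forall>y\<in>topspace X. le x y \<longrightarrow> y \<in> U))"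

definition priestley :: "'a topology \<Rightarrow> ('a \<Rightarrow> 'a \<Rightarrow> bool) \<Rightarrow> bool" where
  "priestley X le =
     ((\<forall>x\<in>topspace X. le x x) \<and>
      (\<forall>x\<in>topspace X. \<forall>y\<in>topspace X. le x y \<and> le y x \<longrightarrow> x = y) \<and>
      (\<forall>x\<in>topspace X. \<forall>y\<in>topspace X. \<forall>z\<in>topspace X. le x y \<and> le y z \<longrightarrow> le x z) \<and>
      compact_space X \<and>
      (\<forall>x\<in>topspace X. \<forall>y\<in>topspace X. \<not> le x y \<longrightarrow>
          (\<exists>U. closedin X U \<and> openin X U \<and> upset X le U \<and> x \<in> U \<and> y \<notin> U)))"

definition rel2 :: "(nat \<Rightarrow> 'a \<Rightarrow> 'a \<Rightarrow> bool) \<Rightarrow> (nat \<Rightarrow> nat \<Rightarrow> 'a \<Rightarrow> 'a \<Rightarrow> bool)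
    \<Rightarrow> nat \<Rightarrow> nat \<Rightarrow> 'a \<Rightarrow> 'a \<Rightarrow> bool" where
  "rel2 le lejk i l = (if i = l then le i else lejk i l)"

definition mutually_increasing ::
  "(nat \<Rightarrow> 'a topology) \<Rightarrow> (nat \<Rightarrow> 'a \<Rightarrow> 'a \<Rightarrow> bool) \<Rightarrow> (nat \<Rightarrow> nat \<Rightarrow> 'a \<Rightarrow> 'a \<Rightarrow> bool)
    \<Rightarrow> nat \<Rightarrow> nat \<Rightarrow> (nat \<Rightarrow> 'a set) \<Rightarrow> bool" where
  "mutually_increasing T le lejk j k U =
     (\<forall>i l. j \<le> i \<and> i \<le> l \<and> l \<le> k \<longrightarrow>
        (\<forall>x\<in>U i. \<forall>y\<in>topspace (T l). rel2 le lejk i l x y \<longrightarrow> y \<in> U l))"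

definition conditions_A ::
  "nat \<Rightarrow> (nat \<Rightarrow> 'a topology) \<Rightarrow> (nat \<Rightarrow> 'a \<Rightarrow> 'a) \<Rightarrow> (nat \<Rightarrow> 'a \<Rightarrow> 'a \<Rightarrow> bool)
    \<Rightarrow> (nat \<Rightarrow> nat \<Rightarrow> 'a \<Rightarrow> 'a \<Rightarrow> bool) \<Rightarrow> bool" where
  "conditions_A n T g le lejk =
   ( \<comment> \<open>A1\<close>
     (\<forall>k\<in>{1..n}. continuous_map (T k) (T 0) (g k)) \<and>
     \<comment> \<open>A2\<close>
     (\<forall>k\<in>{1..n}. \<forall>x\<in>topspace (T k). \<forall>y\<in>topspace (T k). le k x y \<longrightarrow> g k x = g k y) \<and>
     \<comment> \<open>A3\<close>
     (\<forall>j k. 1 \<le> j \<and> j < k \<and> k \<le> n \<longrightarrow>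
        (\<forall>x\<in>topspace (T j). \<forall>y\<in>topspace (T k). lejk j k x y \<longrightarrow> g j x = g k y)) \<and>
     \<comment> \<open>A4\<close>
     (\<forall>j k. 1 \<le> j \<and> j < k \<and> k \<le> n \<longrightarrow>
        (\<forall>x\<in>topspace (T j). \<forall>y\<in>topspace (T j). \<forall>u\<in>topspace (T k). \<forall>v\<in>topspace (T k).
           le j x y \<and> lejk j k y u \<and> le k u v \<longrightarrow> lejk j k x v)) \<and>
     \<comment> \<open>A5\<close>
     (\<forall>j k l. 1 \<le> j \<and> j < k \<and> k < l \<and> l \<le> n \<longrightarrow>
        (\<forall>x\<in>topspace (T j). \<forall>y\<in>topspace (T k). \<forall>z\<in>topspace (T l).
           lejk j k x y \<and> lejk k l y z \<longrightarrow> lejk j l x z)) \<and>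
     \<comment> \<open>A6\<close>
     (\<forall>k\<le>n. priestley (T k) (le k)) \<and>
     \<comment> \<open>A7\<close>
     (\<forall>j k. 1 \<le> j \<and> j < k \<and> k \<le> n \<longrightarrow>
        (\<forall>x\<in>topspace (T j). \<forall>y\<in>topspace (T k). \<not> lejk j k x y \<longrightarrow>
           (\<exists>U. (\<forall>l\<in>{j..k}. closedin (T l) (U l) \<and> openin (T l) (U l) \<and> upset (T l) (le l) (U l)) \<and>
                mutually_increasing T le lejk j k U \<and>
                x \<in> U j \<and> y \<in> topspace (T k) - U k))))"

end

(*
  Necessity: the coordinate projections of a closed substructure of M_n^S are morphisms into
  M_n that jointly separate points and reflect every relation. As M_n satisfies the order
  axioms and (A2)-(A5), so does the structure; pulling back the principal up-sets of M_n along
  a single coordinate gives the clopen up-sets required by (A6) and (A7); compactness and (A1)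
  come from the closed embedding into the compact space M_n^S.

  Sufficiency: a clopen up-set A of X_0 together with a mutually increasing family V of clopen
  sets defines a morphism into M_n, sending x in X_0 to f^0 or bot^0 according as x is in A,
  and x in X_k to bot^k if g_k x is not in A, and otherwise to 0^k or f^k according as x is in
  V_k. Priestley separation in X_0 and (A6), (A7) provide enough of these morphisms to separate
  points and reflect all relations, so the evaluation map into M_n^S, with S the set of all
  morphisms, is a continuous injection of a compact space into a Hausdorff one, hence a
  homeomorphism onto a closed substructure.
*)
theory Submission
  imports Defs
begin

lemma clopen_preimage_discrete:
  assumes "continuous_map X (discrete_topology D) f"
  shows "openin X {x \<in> topspace X. P (f x)}" and "closedin X {x \<in> topspace X. P (f x)}"
proof -
  have eq: "{x \<in> topspace X. P (f x)} = {x \<in> topspace X. f x \<in> {d \<in> D. P d}}"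
    using continuous_map_image_subset_topspace[OF assms] by auto
  show "openin X {x \<in> topspace X. P (f x)}"
    unfolding eq by (rule openin_continuous_map_preimage[OF assms]) auto
  show "closedin X {x \<in> topspace X. P (f x)}"
    unfolding eq by (rule closedin_continuous_map_preimage[OF assms]) auto
qed

lemma continuous_map_if_clopen:
  assumes "continuous_map X Z p" "closedin Z U" "openin Z U"
    and "continuous_map X Y f" "continuous_map X Y h"
  shows "continuous_map X Y (\<lambda>x. if p x \<in> U then f x else h x)"
proof -
  have "Z frontier_of U = {}"
    using assms(2,3) by (simp add: frontier_of_eq_empty closedin_subset)
  then show ?thesis
    by (intro continuous_map_cases_function[OF assms(1)])
      (auto intro: continuous_map_from_subtopology assms(4,5))
qed

lemma continuous_map_conjugate:
  assumes "continuous_map X Y \<phi>" "homeomorphic_map Z W \<psi>" "continuous_map Y W h"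
    and "\<And>x. x \<in> topspace X \<Longrightarrow> f x \<in> topspace Z"
    and "\<And>x. x \<in> topspace X \<Longrightarrow> \<psi> (f x) = h (\<phi> x)"
  shows "continuous_map X Z f"
proof -
  obtain \<psi>' where "homeomorphic_maps Z W \<psi> \<psi>'"
    using assms(2) homeomorphic_map_maps by blast
  then have \<psi>': "continuous_map W Z \<psi>'" and inv: "\<And>z. z \<in> topspace Z \<Longrightarrow> \<psi>' (\<psi> z) = z"
    by (auto simp: homeomorphic_maps_def)
  have "continuous_map X Z (\<psi>' \<circ> h \<circ> \<phi>)"
    using assms(1,3) \<psi>' by (intro continuous_map_compose)
  then show ?thesis
    by (rule continuous_map_eq) (simp add: inv assms(4) flip: assms(5))
qed

lemma leM_refl: "a \<in> Msort k \<Longrightarrow> leM k a a"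
  by (auto simp: leM_def)

lemma leM_trans: "leM k a b \<Longrightarrow> leM k b c \<Longrightarrow> leM k a c"
  by (auto simp: leM_def Msort_def split: if_splits)

lemma leM_antisym: "leM k a b \<Longrightarrow> leM k b a \<Longrightarrow> a = b"
  by (auto simp: leM_def Msort_def split: if_splits)

lemma leM_imp_gM_eq: "1 \<le> k \<Longrightarrow> leM k a b \<Longrightarrow> gM a = gM b"
  by (auto simp: leM_def Msort_def)

lemma lejkM_imp_gM_eq: "lejkM j k a b \<Longrightarrow> gM a = gM b"
  by (auto simp: lejkM_def)

lemma lejkM_trans: "lejkM j k a b \<Longrightarrow> lejkM k l b c \<Longrightarrow> lejkM j l a c"
  by (auto simp: lejkM_def)

lemma leM_lejkM_trans: "1 \<le> j \<Longrightarrow> leM j a b \<Longrightarrow> lejkM j k b c \<Longrightarrow> lejkM j k a c"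
  by (auto simp: leM_def lejkM_def Msort_def)

lemma lejkM_leM_trans: "1 \<le> k \<Longrightarrow> lejkM j k a b \<Longrightarrow> leM k b c \<Longrightarrow> lejkM j k a c"
  by (auto simp: leM_def lejkM_def Msort_def)

definition rel2M :: "nat \<Rightarrow> nat \<Rightarrow> mel \<Rightarrow> mel \<Rightarrow> bool" where
  "rel2M i l = (if i = l then leM i else lejkM i l)"

lemma rel2M_trans:
  \<comment> \<open>The side condition is needed: \<open>leM 0\<close> puts \<open>Bot 0\<close> below \<open>Fm 0\<close>, but \<open>lejkM 0 l\<close>
    does not relate \<open>Bot 0\<close> to \<open>Fm l\<close>.\<close>
  assumes "j \<le> i" "i \<le> l" "1 \<le> j \<or> l = 0" and ab: "rel2M j i a b" and bc: "rel2M i l b c"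
  shows "rel2M j l a c"
proof (cases "j = i"; cases "i = l")
  assume "j = i" "i = l"
  then show ?thesis using ab bc by (auto simp: rel2M_def intro: leM_trans)
next
  assume "j = i" "i \<noteq> l"
  then show ?thesis using assms(2,3) ab bc by (auto simp: rel2M_def intro: leM_lejkM_trans)
next
  assume "j \<noteq> i" "i = l"
  then show ?thesis using assms(1) ab bc by (auto simp: rel2M_def intro: lejkM_leM_trans)
next
  assume "j \<noteq> i" "i \<noteq> l"
  then show ?thesis using assms(1,2) ab bc by (auto simp: rel2M_def intro: lejkM_trans)
qed

lemma topspace_PT: "topspace (PT k S) = (\<Pi>\<^sub>E s\<in>S. Msort k)"
  by (simp add: PT_def)

lemma compact_space_PT: "compact_space (PT k S)"
  by (simp add: PT_def compact_space_product_topology compact_space_discrete_topology Msort_def)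

lemma Hausdorff_space_PT: "Hausdorff_space (PT k S)"
  by (simp add: PT_def Hausdorff_space_product_topology)

lemma continuous_map_PT_projection:
  "s \<in> S \<Longrightarrow> continuous_map (PT k S) (discrete_topology (Msort k)) (\<lambda>f. f s)"
  unfolding PT_def by (rule continuous_map_product_projection)

lemma gM_Msort: "a \<in> Msort k \<Longrightarrow> gM a \<in> Msort 0"
  by (auto simp: Msort_def split: if_splits)

lemma continuous_map_gP: "continuous_map (PT k S) (PT 0 S) (gP S)"
  unfolding PT_def continuous_map_componentwise
proof (intro conjI ballI)
  fix s assume "s \<in> S"
  then have "continuous_map (PT k S) (discrete_topology (Msort 0)) (gM \<circ> (\<lambda>f. f s))"
    by (intro continuous_map_compose[OF continuous_map_PT_projection]) (auto simp: gM_Msort)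
  then show "continuous_map (product_topology (\<lambda>_. discrete_topology (Msort k)) S)
      (discrete_topology (Msort 0)) (\<lambda>f. gP S f s)"
    using \<open>s \<in> S\<close> by (simp add: PT_def gP_def o_def)
qed (auto simp: gP_def)

lemma mutually_increasingD:
  "mutually_increasing T le lejk j k U \<Longrightarrow> j \<le> i \<Longrightarrow> i \<le> l \<Longrightarrow> l \<le> k \<Longrightarrow> x \<in> U i
    \<Longrightarrow> y \<in> topspace (T l) \<Longrightarrow> rel2 le lejk i l x y \<Longrightarrow> y \<in> U l"
  unfolding mutually_increasing_def by blast

lemma mutually_increasing_upset:
  assumes "mutually_increasing T le lejk j k U" "l \<in> {j..k}" "U l \<subseteq> topspace (T l)"
  shows "upset (T l) (le l) (U l)"
  unfolding upset_def
proof (intro conjI ballI impI)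
  fix x y assume "x \<in> U l" "y \<in> topspace (T l)" "le l x y"
  then show "y \<in> U l"
    using mutually_increasingD[OF assms(1), of l l x y] assms(2) by (simp add: rel2_def)
qed (rule assms(3))

lemma upset_mutually_increasing:
  assumes "upset (T k) (le k) U"
  shows "mutually_increasing T le lejk k k (\<lambda>_. U)"
  unfolding mutually_increasing_def
proof (intro allI impI)
  fix i l assume "k \<le> i \<and> i \<le> l \<and> l \<le> k"
  then have "i = k" "l = k" by auto
  then show "\<forall>x\<in>U. \<forall>y\<in>topspace (T l). rel2 le lejk i l x y \<longrightarrow> y \<in> U"
    using assms by (simp add: upset_def rel2_def)
qed

lemma mutually_increasing_extend:
  assumes "mutually_increasing T le lejk j k U"
  shows "mutually_increasing T le lejk a b
    (\<lambda>l. if l < j then {} else if l \<le> k then U l else topspace (T l))"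
  unfolding mutually_increasing_def
proof (intro allI impI ballI)
  fix i l x y assume il: "a \<le> i \<and> i \<le> l \<and> l \<le> b"
    and x: "x \<in> (if i < j then {} else if i \<le> k then U i else topspace (T i))"
    and y: "y \<in> topspace (T l)" and xy: "rel2 le lejk i l x y"
  show "y \<in> (if l < j then {} else if l \<le> k then U l else topspace (T l))"
  proof (cases "k < l")
    case True
    then show ?thesis using x y il by (auto split: if_splits)
  next
    case False
    then have "\<not> i < j" "\<not> l < j" "l \<le> k" "x \<in> U i" using x il by (auto split: if_splits)
    then show ?thesis using mutually_increasingD[OF assms, of i l x y] il y xy by simp
  qed
qed

section \<open>Morphisms into the generator\<close>

lemma mstructure_g_in:
  "mstructure n T g le lejk \<Longrightarrow> k \<in> {1..n} \<Longrightarrow> x \<in> topspace (T k) \<Longrightarrow> g k x \<in> topspace (T 0)"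
  unfolding mstructure_def by blast

lemma mstructure_disjoint:
  "mstructure n T g le lejk \<Longrightarrow> j \<le> n \<Longrightarrow> k \<le> n \<Longrightarrow> x \<in> topspace (T j) \<Longrightarrow> x \<in> topspace (T k)
    \<Longrightarrow> j = k"
  unfolding mstructure_def by blast

definition M_morphism :: "nat \<Rightarrow> (nat \<Rightarrow> 'a topology) \<Rightarrow> (nat \<Rightarrow> 'a \<Rightarrow> 'a) \<Rightarrow> (nat \<Rightarrow> 'a \<Rightarrow> 'a \<Rightarrow> bool)
    \<Rightarrow> (nat \<Rightarrow> nat \<Rightarrow> 'a \<Rightarrow> 'a \<Rightarrow> bool) \<Rightarrow> ('a \<Rightarrow> mel) \<Rightarrow> bool" where
  "M_morphism n T g le lejk \<alpha> =
    ((\<forall>k\<le>n. continuous_map (T k) (discrete_topology (Msort k)) \<alpha>) \<and>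
     (\<forall>k\<in>{1..n}. \<forall>x\<in>topspace (T k). \<alpha> (g k x) = gM (\<alpha> x)) \<and>
     (\<forall>k\<le>n. \<forall>x\<in>topspace (T k). \<forall>y\<in>topspace (T k). le k x y \<longrightarrow> leM k (\<alpha> x) (\<alpha> y)) \<and>
     (\<forall>j k. 1 \<le> j \<and> j < k \<and> k \<le> n \<longrightarrow>
        (\<forall>x\<in>topspace (T j). \<forall>y\<in>topspace (T k). lejk j k x y \<longrightarrow> lejkM j k (\<alpha> x) (\<alpha> y))))"

context
  fixes n T g le lejk \<alpha>
  assumes \<alpha>: "M_morphism n T g le lejk \<alpha>"
begin

lemma M_morphism_continuous: "k \<le> n \<Longrightarrow> continuous_map (T k) (discrete_topology (Msort k)) \<alpha>"
  using \<alpha> unfolding M_morphism_def by blast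

lemma M_morphism_Msort: "k \<le> n \<Longrightarrow> x \<in> topspace (T k) \<Longrightarrow> \<alpha> x \<in> Msort k"
  using continuous_map_image_subset_topspace[OF M_morphism_continuous] by auto

lemma M_morphism_g: "k \<in> {1..n} \<Longrightarrow> x \<in> topspace (T k) \<Longrightarrow> \<alpha> (g k x) = gM (\<alpha> x)"
  using \<alpha> unfolding M_morphism_def by blast

lemma M_morphism_le:
  "k \<le> n \<Longrightarrow> x \<in> topspace (T k) \<Longrightarrow> y \<in> topspace (T k) \<Longrightarrow> le k x y \<Longrightarrow> leM k (\<alpha> x) (\<alpha> y)"
  using \<alpha> unfolding M_morphism_def by blast

lemma M_morphism_lejk:
  "1 \<le> j \<Longrightarrow> j < k \<Longrightarrow> k \<le> n \<Longrightarrow> x \<in> topspace (T j) \<Longrightarrow> y \<in> topspace (T k) \<Longrightarrow> lejk j k x y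
    \<Longrightarrow> lejkM j k (\<alpha> x) (\<alpha> y)"
  using \<alpha> unfolding M_morphism_def by blast

lemma M_morphism_rel2:
  assumes "i \<le> l" "l \<le> n" "i = l \<or> 1 \<le> i" "x \<in> topspace (T i)" "y \<in> topspace (T l)"
    and "rel2 le lejk i l x y"
  shows "rel2M i l (\<alpha> x) (\<alpha> y)"
proof (cases "i = l")
  case True
  then show ?thesis using assms M_morphism_le[of l x y] by (simp add: rel2_def rel2M_def)
next
  case False
  then show ?thesis using assms M_morphism_lejk[of i l x y] by (simp add: rel2_def rel2M_def)
qed

lemma M_morphism_principal_upsets_increasing:
  assumes "k \<le> n" "1 \<le> j \<or> k = 0"
  shows "mutually_increasing T le lejk j k (\<lambda>l. {z \<in> topspace (T l). rel2M j l (\<alpha> x) (\<alpha> z)})"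
  unfolding mutually_increasing_def
proof (intro allI impI ballI)
  fix i l z w
  assume il: "j \<le> i \<and> i \<le> l \<and> l \<le> k" and z: "z \<in> {z \<in> topspace (T i). rel2M j i (\<alpha> x) (\<alpha> z)}"
    and w: "w \<in> topspace (T l)" and zw: "rel2 le lejk i l z w"
  have "i = l \<or> 1 \<le> i" "1 \<le> j \<or> l = 0" "l \<le> n" "z \<in> topspace (T i)"
    using il z assms by auto
  then have "rel2M i l (\<alpha> z) (\<alpha> w)"
    using M_morphism_rel2 il w zw by blast
  then have "rel2M j l (\<alpha> x) (\<alpha> w)"
    using rel2M_trans[of j i l] il z \<open>1 \<le> j \<or> l = 0\<close> by blast
  then show "w \<in> {z \<in> topspace (T l). rel2M j l (\<alpha> x) (\<alpha> z)}" using w by simp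
qed

lemma M_morphism_principal_upsets:
  assumes "j \<le> k" "k \<le> n" "1 \<le> j \<or> k = 0" "x \<in> topspace (T j)"
  defines "U \<equiv> \<lambda>l. {z \<in> topspace (T l). rel2M j l (\<alpha> x) (\<alpha> z)}"
  shows "\<forall>l\<in>{j..k}. closedin (T l) (U l) \<and> openin (T l) (U l) \<and> upset (T l) (le l) (U l)"
    and "mutually_increasing T le lejk j k U"
    and "x \<in> U j"
proof -
  show mi: "mutually_increasing T le lejk j k U"
    unfolding U_def using assms(2,3) by (rule M_morphism_principal_upsets_increasing)
  show "\<forall>l\<in>{j..k}. closedin (T l) (U l) \<and> openin (T l) (U l) \<and> upset (T l) (le l) (U l)"
  proof
    fix l assume l: "l \<in> {j..k}"
    then have "continuous_map (T l) (discrete_topology (Msort l)) \<alpha>"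
      using assms(2) by (intro M_morphism_continuous) simp
    then have "closedin (T l) (U l)" "openin (T l) (U l)"
      unfolding U_def by (rule clopen_preimage_discrete)+
    moreover have "upset (T l) (le l) (U l)"
      by (rule mutually_increasing_upset[OF mi l]) (auto simp: U_def)
    ultimately show "closedin (T l) (U l) \<and> openin (T l) (U l) \<and> upset (T l) (le l) (U l)"
      by blast
  qed
  show "x \<in> U j"
    using assms(1,2,4) M_morphism_Msort[of j x] by (simp add: U_def rel2M_def leM_refl)
qed

end

definition evaluation_map :: "'s set \<Rightarrow> ('s \<Rightarrow> 'a \<Rightarrow> mel) \<Rightarrow> 'a \<Rightarrow> 's \<Rightarrow> mel" where
  "evaluation_map S \<alpha> x = restrict (\<lambda>s. \<alpha> s x) S"

locale separating_family =
  fixes n :: nat and T :: "nat \<Rightarrow> 'a topology" and g :: "nat \<Rightarrow> 'a \<Rightarrow> 'a"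
    and le :: "nat \<Rightarrow> 'a \<Rightarrow> 'a \<Rightarrow> bool" and lejk :: "nat \<Rightarrow> nat \<Rightarrow> 'a \<Rightarrow> 'a \<Rightarrow> bool"
    and S :: "'s set" and \<alpha> :: "'s \<Rightarrow> 'a \<Rightarrow> mel"
  assumes is_mstructure: "mstructure n T g le lejk"
    and morphism: "s \<in> S \<Longrightarrow> M_morphism n T g le lejk (\<alpha> s)"
    and separates: "\<lbrakk>k \<le> n; x \<in> topspace (T k); y \<in> topspace (T k); \<forall>s\<in>S. \<alpha> s x = \<alpha> s y\<rbrakk> \<Longrightarrow> x = y"
    and reflects_le: "\<lbrakk>k \<le> n; x \<in> topspace (T k); y \<in> topspace (T k);
      \<forall>s\<in>S. leM k (\<alpha> s x) (\<alpha> s y)\<rbrakk> \<Longrightarrow> le k x y"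
    and reflects_lejk: "\<lbrakk>1 \<le> j; j < k; k \<le> n; x \<in> topspace (T j); y \<in> topspace (T k);
      \<forall>s\<in>S. lejkM j k (\<alpha> s x) (\<alpha> s y)\<rbrakk> \<Longrightarrow> lejk j k x y"
begin

lemma le_iff:
  "k \<le> n \<Longrightarrow> x \<in> topspace (T k) \<Longrightarrow> y \<in> topspace (T k) \<Longrightarrow>
    le k x y \<longleftrightarrow> (\<forall>s\<in>S. leM k (\<alpha> s x) (\<alpha> s y))"
  using reflects_le M_morphism_le[OF morphism] by blast

lemma lejk_iff:
  "1 \<le> j \<Longrightarrow> j < k \<Longrightarrow> k \<le> n \<Longrightarrow> x \<in> topspace (T j) \<Longrightarrow> y \<in> topspace (T k) \<Longrightarrow>
    lejk j k x y \<longleftrightarrow> (\<forall>s\<in>S. lejkM j k (\<alpha> s x) (\<alpha> s y))"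
  using reflects_lejk M_morphism_lejk[OF morphism] by blast

lemma g_eq:
  assumes "j \<in> {1..n}" "k \<in> {1..n}" "x \<in> topspace (T j)" "y \<in> topspace (T k)"
    and "\<forall>s\<in>S. gM (\<alpha> s x) = gM (\<alpha> s y)"
  shows "g j x = g k y"
proof (rule separates[of 0])
  show "\<forall>s\<in>S. \<alpha> s (g j x) = \<alpha> s (g k y)"
    using assms M_morphism_g[OF morphism] by simp
qed (use assms mstructure_g_in[OF is_mstructure] in auto)

lemma rel2_separation:
  assumes "j \<le> k" "k \<le> n" "1 \<le> j \<or> k = 0" "x \<in> topspace (T j)" "y \<in> topspace (T k)"
    and "\<not> rel2 le lejk j k x y"
  shows "\<exists>U. (\<forall>l\<in>{j..k}. closedin (T l) (U l) \<and> openin (T l) (U l) \<and> upset (T l) (le l) (U l)) \<and>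
           mutually_increasing T le lejk j k U \<and> x \<in> U j \<and> y \<in> topspace (T k) - U k"
proof -
  have "\<not> (\<forall>s\<in>S. rel2M j k (\<alpha> s x) (\<alpha> s y))"
  proof (cases "j = k")
    case True
    then show ?thesis using assms le_iff by (simp add: rel2_def rel2M_def)
  next
    case False
    then show ?thesis using assms lejk_iff by (simp add: rel2_def rel2M_def)
  qed
  then obtain s where s: "s \<in> S" "\<not> rel2M j k (\<alpha> s x) (\<alpha> s y)" by blast
  let ?U = "\<lambda>l. {z \<in> topspace (T l). rel2M j l (\<alpha> s x) (\<alpha> s z)}"
  have "y \<in> topspace (T k) - ?U k" using s(2) assms(5) by simp
  with M_morphism_principal_upsets[OF morphism[OF s(1)] assms(1-4)] show ?thesis
    by (intro exI[of _ ?U] conjI)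
qed

lemma priestley:
  assumes k: "k \<le> n" and "compact_space (T k)"
  shows "priestley (T k) (le k)"
  unfolding priestley_def
proof (intro conjI ballI impI)
  fix x assume "x \<in> topspace (T k)"
  then show "le k x x" using k M_morphism_Msort[OF morphism] by (simp add: le_iff leM_refl)
next
  fix x y assume x: "x \<in> topspace (T k)" and y: "y \<in> topspace (T k)" and "le k x y \<and> le k y x"
  then have "\<forall>s\<in>S. leM k (\<alpha> s x) (\<alpha> s y) \<and> leM k (\<alpha> s y) (\<alpha> s x)"
    using k by (simp add: le_iff)
  then show "x = y" using k x y leM_antisym by (blast intro: separates)
next
  fix x y z assume xyz: "x \<in> topspace (T k)" "y \<in> topspace (T k)" "z \<in> topspace (T k)"
    and "le k x y \<and> le k y z"
  then have "\<forall>s\<in>S. leM k (\<alpha> s x) (\<alpha> s y) \<and> leM k (\<alpha> s y) (\<alpha> s z)"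
    using k by (simp add: le_iff)
  then show "le k x z" using k xyz leM_trans by (simp add: le_iff) blast
next
  fix x y assume x: "x \<in> topspace (T k)" and y: "y \<in> topspace (T k)" and "\<not> le k x y"
  then have "\<not> rel2 le lejk k k x y" by (simp add: rel2_def)
  moreover have "1 \<le> k \<or> k = 0" by linarith
  ultimately obtain U where "\<forall>l\<in>{k..k}. closedin (T l) (U l) \<and> openin (T l) (U l) \<and> upset (T l) (le l) (U l)"
    "x \<in> U k" "y \<in> topspace (T k) - U k"
    using rel2_separation[OF order_refl k _ x y] by blast
  then show "\<exists>U. closedin (T k) U \<and> openin (T k) U \<and> upset (T k) (le k) U \<and> x \<in> U \<and> y \<notin> U"
    by auto
qed fact

lemma le_imp_g_eq:
  "k \<in> {1..n} \<Longrightarrow> x \<in> topspace (T k) \<Longrightarrow> y \<in> topspace (T k) \<Longrightarrow> le k x y \<Longrightarrow> g k x = g k y"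
  by (intro g_eq) (auto simp: le_iff intro: leM_imp_gM_eq)

lemma lejk_imp_g_eq:
  "1 \<le> j \<Longrightarrow> j < k \<Longrightarrow> k \<le> n \<Longrightarrow> x \<in> topspace (T j) \<Longrightarrow> y \<in> topspace (T k) \<Longrightarrow> lejk j k x y
    \<Longrightarrow> g j x = g k y"
  by (intro g_eq) (auto simp: lejk_iff intro: lejkM_imp_gM_eq)

lemma le_lejk_le_trans:
  assumes jk: "1 \<le> j" "j < k" "k \<le> n"
    and xy: "x \<in> topspace (T j)" "y \<in> topspace (T j)" and uv: "u \<in> topspace (T k)" "v \<in> topspace (T k)"
    and "le j x y" "lejk j k y u" "le k u v"
  shows "lejk j k x v"
proof -
  have "lejkM j k (\<alpha> s x) (\<alpha> s v)" if "s \<in> S" for s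
  proof -
    have "leM j (\<alpha> s x) (\<alpha> s y)" "lejkM j k (\<alpha> s y) (\<alpha> s u)" "leM k (\<alpha> s u) (\<alpha> s v)"
      using assms that by (simp_all add: le_iff lejk_iff)
    then show ?thesis
      using jk leM_lejkM_trans lejkM_leM_trans by simp
  qed
  then show ?thesis using assms by (simp add: lejk_iff)
qed

lemma lejk_trans:
  "1 \<le> j \<Longrightarrow> j < k \<Longrightarrow> k < l \<Longrightarrow> l \<le> n \<Longrightarrow>
    x \<in> topspace (T j) \<Longrightarrow> y \<in> topspace (T k) \<Longrightarrow> z \<in> topspace (T l) \<Longrightarrow>
    lejk j k x y \<Longrightarrow> lejk k l y z \<Longrightarrow> lejk j l x z"
  by (auto simp: lejk_iff intro: lejkM_trans)

lemma imp_conditions_A: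
  assumes "\<And>k. k \<le> n \<Longrightarrow> compact_space (T k)"
    and "\<And>k. k \<in> {1..n} \<Longrightarrow> continuous_map (T k) (T 0) (g k)"
  shows "conditions_A n T g le lejk"
  unfolding conditions_A_def
proof (intro conjI allI impI ballI)
  fix j k x y assume "1 \<le> j \<and> j < k \<and> k \<le> n" "x \<in> topspace (T j)" "y \<in> topspace (T k)"
    "\<not> lejk j k x y"
  then show "\<exists>U. (\<forall>l\<in>{j..k}. closedin (T l) (U l) \<and> openin (T l) (U l) \<and> upset (T l) (le l) (U l)) \<and>
           mutually_increasing T le lejk j k U \<and> x \<in> U j \<and> y \<in> topspace (T k) - U k"
    by (intro rel2_separation) (auto simp: rel2_def)
qed (use assms priestley le_imp_g_eq lejk_imp_g_eq le_lejk_le_trans lejk_trans in auto)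

lemma evaluation_map_continuous:
  assumes "k \<le> n"
  shows "continuous_map (T k) (PT k S) (evaluation_map S \<alpha>)"
  unfolding PT_def continuous_map_componentwise
  using M_morphism_continuous[OF morphism] assms by (auto simp: evaluation_map_def)

lemma evaluation_map_inj: "k \<le> n \<Longrightarrow> inj_on (evaluation_map S \<alpha>) (topspace (T k))"
  by (rule inj_onI, rule separates) (auto simp: evaluation_map_def, metis restrict_apply')

lemma evaluation_map_homeomorphic:
  assumes "k \<le> n" "compact_space (T k)"
  shows "homeomorphic_map (T k)
    (subtopology (PT k S) (evaluation_map S \<alpha> ` topspace (T k))) (evaluation_map S \<alpha>)"
proof (rule continuous_imp_homeomorphic_map)
  show "continuous_map (T k) (subtopology (PT k S) (evaluation_map S \<alpha> ` topspace (T k)))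
      (evaluation_map S \<alpha>)"
    using evaluation_map_continuous[OF assms(1)] by (simp add: continuous_map_in_subtopology)
  show "evaluation_map S \<alpha> ` topspace (T k) =
      topspace (subtopology (PT k S) (evaluation_map S \<alpha> ` topspace (T k)))"
    using continuous_map_image_subset_topspace[OF evaluation_map_continuous[OF assms(1)]] by auto
qed (simp_all add: assms evaluation_map_inj Hausdorff_space_subtopology Hausdorff_space_PT)

lemma evaluation_map_closed:
  assumes "k \<le> n" "compact_space (T k)"
  shows "closedin (PT k S) (evaluation_map S \<alpha> ` topspace (T k))"
  using assms evaluation_map_continuous
  by (intro compactin_imp_closedin Hausdorff_space_PT image_compactin[of "T k"])
    (auto simp: compact_space_def)

lemma evaluation_map_g:
  "k \<in> {1..n} \<Longrightarrow> x \<in> topspace (T k) \<Longrightarrow> evaluation_map S \<alpha> (g k x) = gP S (evaluation_map S \<alpha> x)"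
  using M_morphism_g[OF morphism] by (auto simp: evaluation_map_def gP_def restrict_def fun_eq_iff)

lemma imp_ISCP_via:
  assumes "S \<noteq> {}" and compact: "\<And>k. k \<le> n \<Longrightarrow> compact_space (T k)"
  shows "ISCP_via n T g le lejk S"
  unfolding ISCP_via_def
proof (intro conjI exI)
  let ?Y = "\<lambda>k. evaluation_map S \<alpha> ` topspace (T k)"
  show "closed_sub n S ?Y"
    unfolding closed_sub_def
    using evaluation_map_closed compact evaluation_map_g mstructure_g_in[OF is_mstructure]
    by (auto simp flip: evaluation_map_g)
  show "iso_to n T g le lejk S ?Y (evaluation_map S \<alpha>)"
    unfolding iso_to_def
    using evaluation_map_homeomorphic compact evaluation_map_g
    by (auto simp: le_iff lejk_iff leP_def lejkP_def evaluation_map_def)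
qed (rule assms(1))

end

section \<open>Necessity of the conditions\<close>

context
  fixes n T g le lejk S Y \<phi>
  assumes iso: "iso_to n T g le lejk S Y \<phi>"
begin

lemma iso_to_homeomorphic: "k \<le> n \<Longrightarrow> homeomorphic_map (T k) (subtopology (PT k S) (Y k)) \<phi>"
  using iso unfolding iso_to_def by blast

lemma iso_to_continuous: "k \<le> n \<Longrightarrow> continuous_map (T k) (PT k S) \<phi>"
  using homeomorphic_imp_continuous_map[OF iso_to_homeomorphic] continuous_map_in_subtopology
  by blast

lemma iso_to_separating_family:
  assumes "mstructure n T g le lejk"
  shows "separating_family n T g le lejk S (\<lambda>s x. \<phi> x s)"
proof
  fix s assume s: "s \<in> S"
  show "M_morphism n T g le lejk (\<lambda>x. \<phi> x s)"
    unfolding M_morphism_def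
  proof (intro conjI allI impI ballI)
    fix k assume "k \<le> n"
    then show "continuous_map (T k) (discrete_topology (Msort k)) (\<lambda>x. \<phi> x s)"
      using continuous_map_compose[OF iso_to_continuous continuous_map_PT_projection[OF s]]
      by (simp add: o_def)
  qed (use iso s in \<open>auto simp: iso_to_def gP_def leP_def lejkP_def\<close>)
next
  fix k x y assume k: "k \<le> n" and xy: "x \<in> topspace (T k)" "y \<in> topspace (T k)"
    and eq: "\<forall>s\<in>S. \<phi> x s = \<phi> y s"
  have "\<phi> x \<in> topspace (PT k S)" "\<phi> y \<in> topspace (PT k S)"
    using xy continuous_map_image_subset_topspace[OF iso_to_continuous[OF k]] by auto
  then have "\<phi> x = \<phi> y" using eq by (auto simp: topspace_PT PiE_def extensional_def fun_eq_iff)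
  then show "x = y"
    using homeomorphic_imp_injective_map[OF iso_to_homeomorphic[OF k]] xy by (auto dest: inj_onD)
qed (use assms iso in \<open>auto simp: iso_to_def leP_def lejkP_def\<close>)

lemma iso_to_compact_space:
  assumes "closed_sub n S Y" "k \<le> n"
  shows "compact_space (T k)"
proof -
  have "compactin (PT k S) (Y k)"
    using assms compact_space_PT closedin_compact_space unfolding closed_sub_def by blast
  then show ?thesis
    using homeomorphic_compact_space homeomorphic_map_imp_homeomorphic_space
      iso_to_homeomorphic[OF assms(2)] compact_space_subtopology by blast
qed

lemma iso_to_continuous_g:
  assumes "mstructure n T g le lejk" "closed_sub n S Y" "k \<in> {1..n}"
  shows "continuous_map (T k) (T 0) (g k)"
proof (rule continuous_map_conjugate)
  show "continuous_map (T k) (subtopology (PT k S) (Y k)) \<phi>"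
    by (intro homeomorphic_imp_continuous_map iso_to_homeomorphic) (use assms(3) in simp)
  show "homeomorphic_map (T 0) (subtopology (PT 0 S) (Y 0)) \<phi>"
    by (simp add: iso_to_homeomorphic)
  show "continuous_map (subtopology (PT k S) (Y k)) (subtopology (PT 0 S) (Y 0)) (gP S)"
    using assms(2,3) unfolding closed_sub_def
    by (intro continuous_map_into_subtopology continuous_map_from_subtopology continuous_map_gP) auto
qed (use assms(3) iso mstructure_g_in[OF assms(1)] in \<open>auto simp: iso_to_def\<close>)

end

lemma ISCP_via_imp_conditions_A:
  assumes "mstructure n T g le lejk" "ISCP_via n T g le lejk S"
  shows "conditions_A n T g le lejk"
proof -
  obtain Y \<phi> where Y: "closed_sub n S Y" and \<phi>: "iso_to n T g le lejk S Y \<phi>"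
    using assms(2) unfolding ISCP_via_def by blast
  interpret separating_family n T g le lejk S "\<lambda>s x. \<phi> x s"
    by (rule iso_to_separating_family[OF \<phi> assms(1)])
  show ?thesis
    by (intro imp_conditions_A iso_to_compact_space[OF \<phi> Y] iso_to_continuous_g[OF \<phi> assms(1) Y])
qed

section \<open>Sufficiency of the conditions\<close>

definition sort_index :: "(nat \<Rightarrow> 'a topology) \<Rightarrow> 'a \<Rightarrow> nat" where
  "sort_index T x = (LEAST k. x \<in> topspace (T k))"

definition indicator_morphism ::
  "(nat \<Rightarrow> 'a topology) \<Rightarrow> (nat \<Rightarrow> 'a \<Rightarrow> 'a) \<Rightarrow> 'a set \<Rightarrow> (nat \<Rightarrow> 'a set) \<Rightarrow> 'a \<Rightarrow> mel" where
  "indicator_morphism T g A V x =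
    (let k = sort_index T x in
     if k = 0 then (if x \<in> A then Fm 0 else Bot 0)
     else if g k x \<in> A then (if x \<in> V k then Zm k else Fm k) else Bot k)"

lemma sort_index_eq:
  assumes "mstructure n T g le lejk" "k \<le> n" "x \<in> topspace (T k)"
  shows "sort_index T x = k"
  unfolding sort_index_def
proof (rule Least_equality)
  fix m assume "x \<in> topspace (T m)"
  then show "k \<le> m"
    using mstructure_disjoint[OF assms(1), of m k x] assms(2,3) by (cases "m \<le> n") auto
qed (rule assms(3))

lemma indicator_morphism_sort0:
  "mstructure n T g le lejk \<Longrightarrow> x \<in> topspace (T 0) \<Longrightarrow>
    indicator_morphism T g A V x = (if x \<in> A then Fm 0 else Bot 0)"
  by (simp add: indicator_morphism_def sort_index_eq[of n T g le lejk 0])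

lemma indicator_morphism_sort:
  "mstructure n T g le lejk \<Longrightarrow> k \<in> {1..n} \<Longrightarrow> x \<in> topspace (T k) \<Longrightarrow>
    indicator_morphism T g A V x = (if g k x \<in> A then (if x \<in> V k then Zm k else Fm k) else Bot k)"
  by (simp add: indicator_morphism_def sort_index_eq[of n T g le lejk k])

lemma leM_indicator_sort0:
  "(a \<longrightarrow> b) \<Longrightarrow> leM 0 (if a then Fm 0 else Bot 0) (if b then Fm 0 else Bot 0)"
  by (auto simp: leM_def Msort_def)

lemma leM_indicator_sort:
  "1 \<le> k \<Longrightarrow> (c \<longrightarrow> d) \<Longrightarrow>
    leM k (if a then (if c then Zm k else Fm k) else Bot k) (if a then (if d then Zm k else Fm k) else Bot k)"
  by (auto simp: leM_def Msort_def)

lemma lejkM_indicator_sort: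
  "(c \<longrightarrow> d) \<Longrightarrow>
    lejkM j k (if a then (if c then Zm j else Fm j) else Bot j) (if a then (if d then Zm k else Fm k) else Bot k)"
  by (auto simp: lejkM_def)

context
  fixes n T g le lejk
  assumes ms: "mstructure n T g le lejk" and CA: "conditions_A n T g le lejk"
begin

lemma condition_A1 [rule_format]: "\<forall>k\<in>{1..n}. continuous_map (T k) (T 0) (g k)"
  using CA unfolding conditions_A_def by (elim conjE) assumption

lemma condition_A2 [rule_format]:
  "\<forall>k\<in>{1..n}. \<forall>x\<in>topspace (T k). \<forall>y\<in>topspace (T k). le k x y \<longrightarrow> g k x = g k y"
  using CA unfolding conditions_A_def by (elim conjE) assumption

lemma condition_A3 [rule_format]:
  "\<forall>j k. 1 \<le> j \<and> j < k \<and> k \<le> n \<longrightarrow>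
     (\<forall>x\<in>topspace (T j). \<forall>y\<in>topspace (T k). lejk j k x y \<longrightarrow> g j x = g k y)"
  using CA unfolding conditions_A_def by (elim conjE) assumption

lemma condition_A6 [rule_format]: "\<forall>k\<le>n. priestley (T k) (le k)"
  using CA unfolding conditions_A_def by (elim conjE) assumption

lemma condition_A7 [rule_format]:
  "\<forall>j k. 1 \<le> j \<and> j < k \<and> k \<le> n \<longrightarrow>
     (\<forall>x\<in>topspace (T j). \<forall>y\<in>topspace (T k). \<not> lejk j k x y \<longrightarrow>
        (\<exists>U. (\<forall>l\<in>{j..k}. closedin (T l) (U l) \<and> openin (T l) (U l) \<and> upset (T l) (le l) (U l)) \<and>
             mutually_increasing T le lejk j k U \<and> x \<in> U j \<and> y \<in> topspace (T k) - U k))"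
  using CA unfolding conditions_A_def by (elim conjE) assumption

lemma priestley_separation:
  "k \<le> n \<Longrightarrow> x \<in> topspace (T k) \<Longrightarrow> y \<in> topspace (T k) \<Longrightarrow> \<not> le k x y \<Longrightarrow>
    \<exists>U. closedin (T k) U \<and> openin (T k) U \<and> upset (T k) (le k) U \<and> x \<in> U \<and> y \<notin> U"
  using condition_A6 unfolding priestley_def by blast

lemma indicator_morphism_continuous:
  assumes "k \<le> n" "closedin (T 0) A" "openin (T 0) A"
    and "k \<noteq> 0 \<Longrightarrow> closedin (T k) (V k) \<and> openin (T k) (V k)"
  shows "continuous_map (T k) (discrete_topology (Msort k)) (indicator_morphism T g A V)"
proof (cases "k = 0")
  case True
  have "continuous_map (T 0) (discrete_topology (Msort 0)) (\<lambda>x. if id x \<in> A then Fm 0 else Bot 0)"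
    using assms(2,3) by (intro continuous_map_if_clopen[of _ "T 0"]) (auto simp: Msort_def)
  then show ?thesis
    unfolding True by (rule continuous_map_eq) (simp add: indicator_morphism_sort0[OF ms])
next
  case False
  then have k: "k \<in> {1..n}" using assms(1) by simp
  have "continuous_map (T k) (discrete_topology (Msort k))
      (\<lambda>x. if g k x \<in> A then (if id x \<in> V k then Zm k else Fm k) else Bot k)"
    using assms(2-4) condition_A1[OF k] k
    by (intro continuous_map_if_clopen[of _ "T 0"] continuous_map_if_clopen[of _ "T k"])
      (auto simp: Msort_def)
  then show ?thesis
    by (rule continuous_map_eq) (simp add: indicator_morphism_sort[OF ms k])
qed

lemma M_morphism_indicator_morphism:
  assumes A: "closedin (T 0) A" "openin (T 0) A" "upset (T 0) (le 0) A"
    and V: "\<And>l. l \<in> {1..n} \<Longrightarrow> closedin (T l) (V l) \<and> openin (T l) (V l)"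
    and V_increasing: "mutually_increasing T le lejk 1 n V"
  shows "M_morphism n T g le lejk (indicator_morphism T g A V)"
  unfolding M_morphism_def
proof (intro conjI allI impI ballI)
  fix k assume "k \<le> n"
  then show "continuous_map (T k) (discrete_topology (Msort k)) (indicator_morphism T g A V)"
    using A V by (intro indicator_morphism_continuous) auto
next
  fix k x assume "k \<in> {1..n}" "x \<in> topspace (T k)"
  then show "indicator_morphism T g A V (g k x) = gM (indicator_morphism T g A V x)"
    by (simp add: indicator_morphism_sort0[OF ms] indicator_morphism_sort[OF ms] mstructure_g_in[OF ms])
next
  fix k x y assume k: "k \<le> n" and x: "x \<in> topspace (T k)" and y: "y \<in> topspace (T k)"
    and xy: "le k x y"
  show "leM k (indicator_morphism T g A V x) (indicator_morphism T g A V y)"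
  proof (cases "k = 0")
    case True
    then have "x \<in> A \<longrightarrow> y \<in> A" using A(3) y xy by (auto simp: upset_def)
    then show ?thesis
      using True x y by (simp add: indicator_morphism_sort0[OF ms] leM_indicator_sort0)
  next
    case False
    then have k1: "k \<in> {1..n}" using k by simp
    have "x \<in> V k \<longrightarrow> y \<in> V k"
      using mutually_increasingD[OF V_increasing, of k k x y] k1 y xy by (simp add: rel2_def)
    then show ?thesis
      using k1 x y condition_A2[OF k1 x y xy]
      by (simp add: indicator_morphism_sort[OF ms] leM_indicator_sort)
  qed
next
  fix j k x y assume jk: "1 \<le> j \<and> j < k \<and> k \<le> n" and x: "x \<in> topspace (T j)"
    and y: "y \<in> topspace (T k)" and xy: "lejk j k x y"
  have "x \<in> V j \<longrightarrow> y \<in> V k"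
    using mutually_increasingD[OF V_increasing, of j k x y] jk y xy by (simp add: rel2_def)
  then show "lejkM j k (indicator_morphism T g A V x) (indicator_morphism T g A V y)"
    using jk x y condition_A3[of j k x y] xy
      indicator_morphism_sort[OF ms, of j x] indicator_morphism_sort[OF ms, of k y]
    by (simp add: lejkM_indicator_sort)
qed

lemma M_morphism_indicator_upset:
  "closedin (T 0) A \<Longrightarrow> openin (T 0) A \<Longrightarrow> upset (T 0) (le 0) A \<Longrightarrow>
    M_morphism n T g le lejk (indicator_morphism T g A (\<lambda>_. {}))"
  by (rule M_morphism_indicator_morphism) (auto simp: mutually_increasing_def)

lemma rel2_separating_upsets:
  assumes "1 \<le> j" "j \<le> k" "k \<le> n" "x \<in> topspace (T j)" "y \<in> topspace (T k)"
    and "\<not> rel2 le lejk j k x y"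
  shows "\<exists>U. (\<forall>l\<in>{j..k}. closedin (T l) (U l) \<and> openin (T l) (U l)) \<and>
           mutually_increasing T le lejk j k U \<and> x \<in> U j \<and> y \<notin> U k"
proof (cases "j = k")
  case True
  with assms have "\<not> le k x y" "x \<in> topspace (T k)" by (simp_all add: rel2_def)
  then obtain U where "closedin (T k) U" "openin (T k) U" "upset (T k) (le k) U" "x \<in> U" "y \<notin> U"
    using priestley_separation[OF assms(3) _ assms(5)] by blast
  then show ?thesis
    using True upset_mutually_increasing by (intro exI[of _ "\<lambda>_. U"]) auto
next
  case False
  then show ?thesis
    using condition_A7[of j k x y] assms by (auto simp: rel2_def)
qed

lemma rel2_separated_by_morphism:
  assumes "j \<le> k" "k \<le> n" "1 \<le> j \<or> k = 0" "x \<in> topspace (T j)" "y \<in> topspace (T k)"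
    and "\<not> rel2 le lejk j k x y"
  shows "\<exists>\<alpha>. M_morphism n T g le lejk \<alpha> \<and> \<not> rel2M j k (\<alpha> x) (\<alpha> y)"
proof (cases "k = 0")
  case True
  with assms have "\<not> le 0 x y" "x \<in> topspace (T 0)" "y \<in> topspace (T 0)" by (simp_all add: rel2_def)
  then obtain A where A: "closedin (T 0) A" "openin (T 0) A" "upset (T 0) (le 0) A" "x \<in> A" "y \<notin> A"
    using priestley_separation[of 0] by blast
  let ?\<alpha> = "indicator_morphism T g A (\<lambda>_. {})"
  have "\<not> rel2M j k (?\<alpha> x) (?\<alpha> y)"
    using True assms A by (auto simp: indicator_morphism_sort0[OF ms] rel2M_def leM_def)
  then show ?thesis using M_morphism_indicator_upset[OF A(1-3)] by blast
next
  case False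
  then have jk: "j \<in> {1..n}" "k \<in> {1..n}" using assms(1-3) by auto
  obtain U where U: "\<forall>l\<in>{j..k}. closedin (T l) (U l) \<and> openin (T l) (U l)"
    "mutually_increasing T le lejk j k U" "x \<in> U j" "y \<notin> U k"
    using rel2_separating_upsets[OF _ assms(1,2,4-6)] jk by auto
  define V where "V = (\<lambda>l. if l < j then {} else if l \<le> k then U l else topspace (T l))"
  let ?\<alpha> = "indicator_morphism T g (topspace (T 0)) V"
  have "M_morphism n T g le lejk ?\<alpha>"
  proof (rule M_morphism_indicator_morphism)
    show "mutually_increasing T le lejk 1 n V"
      unfolding V_def by (rule mutually_increasing_extend[OF U(2)])
  qed (use U(1) in \<open>auto simp: V_def upset_def\<close>)
  moreover have "?\<alpha> x = Zm j" "?\<alpha> y = Fm k"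
    using assms(1) U(3,4) mstructure_g_in[OF ms jk(1) assms(4)] mstructure_g_in[OF ms jk(2) assms(5)]
    by (simp_all add: indicator_morphism_sort[OF ms jk(1) assms(4)]
        indicator_morphism_sort[OF ms jk(2) assms(5)] V_def)
  ultimately show ?thesis by (auto simp: rel2M_def leM_def lejkM_def)
qed

lemma separating_family_of_morphisms:
  "separating_family n T g le lejk {\<alpha>. M_morphism n T g le lejk \<alpha>} (\<lambda>\<alpha>. \<alpha>)"
proof
  fix k x y assume k: "k \<le> n" and x: "x \<in> topspace (T k)" and y: "y \<in> topspace (T k)"
  have k01: "1 \<le> k \<or> k = 0" by linarith
  have sep: "\<exists>\<alpha>. M_morphism n T g le lejk \<alpha> \<and> \<not> leM k (\<alpha> x') (\<alpha> y')"
    if "x' \<in> topspace (T k)" "y' \<in> topspace (T k)" "\<not> le k x' y'" for x' y'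
    using rel2_separated_by_morphism[OF order_refl k k01 that(1,2)] that(3) by (simp add: rel2_def rel2M_def)
  show "le k x y" if "\<forall>\<alpha>\<in>{\<alpha>. M_morphism n T g le lejk \<alpha>}. leM k (\<alpha> x) (\<alpha> y)"
    using that sep[OF x y] by blast
  show "x = y" if "\<forall>\<alpha>\<in>{\<alpha>. M_morphism n T g le lejk \<alpha>}. \<alpha> x = \<alpha> y"
  proof (rule ccontr)
    assume "x \<noteq> y"
    then have "\<not> le k x y \<or> \<not> le k y x"
      using condition_A6[OF k] x y unfolding priestley_def by blast
    then obtain \<alpha> where \<alpha>: "M_morphism n T g le lejk \<alpha>"
      and "\<not> leM k (\<alpha> x) (\<alpha> y) \<or> \<not> leM k (\<alpha> y) (\<alpha> x)"
      using sep[OF x y] sep[OF y x] by blast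
    then have "\<alpha> x \<noteq> \<alpha> y" using leM_refl M_morphism_Msort[OF \<alpha> k x] by auto
    then show False using that \<alpha> by blast
  qed
next
  fix j k x y assume "1 \<le> j" "j < k" "k \<le> n" "x \<in> topspace (T j)" "y \<in> topspace (T k)"
    and "\<forall>\<alpha>\<in>{\<alpha>. M_morphism n T g le lejk \<alpha>}. lejkM j k (\<alpha> x) (\<alpha> y)"
  then show "lejk j k x y"
    using rel2_separated_by_morphism[of j k x y] by (auto simp: rel2_def rel2M_def)
qed (simp_all add: ms)

lemma conditions_A_imp_ISCP_via: "ISCP_via n T g le lejk {\<alpha>. M_morphism n T g le lejk \<alpha>}"
proof -
  interpret separating_family n T g le lejk "{\<alpha>. M_morphism n T g le lejk \<alpha>}" "\<lambda>\<alpha>. \<alpha>"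
    by (rule separating_family_of_morphisms)
  have "indicator_morphism T g {} (\<lambda>_. {}) \<in> {\<alpha>. M_morphism n T g le lejk \<alpha>}"
    by (simp add: M_morphism_indicator_upset upset_def)
  then show ?thesis
    using condition_A6 by (intro imp_ISCP_via) (auto simp: priestley_def)
qed

end

theorem theorem4p2:
  fixes n :: nat
    and T :: "nat \<Rightarrow> 'a topology"
    and g :: "nat \<Rightarrow> 'a \<Rightarrow> 'a"
    and le :: "nat \<Rightarrow> 'a \<Rightarrow> 'a \<Rightarrow> bool"
    and lejk :: "nat \<Rightarrow> nat \<Rightarrow> 'a \<Rightarrow> 'a \<Rightarrow> bool"
  assumes "1 \<le> n"
    and "mstructure n T g le lejk"
  shows "((\<exists>S :: 's set. ISCP_via n T g le lejk S) \<longrightarrow> conditions_A n T g le lejk)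
       \<and> (conditions_A n T g le lejk \<longrightarrow> (\<exists>S :: ('a \<Rightarrow> mel) set. ISCP_via n T g le lejk S))"
proof (intro conjI impI)
  assume "\<exists>S :: 's set. ISCP_via n T g le lejk S"
  then show "conditions_A n T g le lejk"
    using ISCP_via_imp_conditions_A[OF assms(2)] by blast
next
  assume "conditions_A n T g le lejk"
  then show "\<exists>S :: ('a \<Rightarrow> mel) set. ISCP_via n T g le lejk S"
    using conditions_A_imp_ISCP_via[OF assms(2)] by blast
qed

end
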